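(* Let $m\in\{1,2\}$, $\gamma\in(\gamma_1,3]$ and $z\in(z_2,z_M]$. Then the continuation to the right, $C:[V_8,0)\to(0,\infty)$, of the local real-analytic solution through $P_8$ satisfies $C(V)<\sqrt{-\tfrac32V}$ for all $V\in(V_8,0)$; in particular $C(V)\to0$ as $V\to0^-$.
   Context: Fix $m\in\{1,2\}$. For $z>0$ put $\lambda=1+m\gamma z$, $a_1=1+\frac{m(\gamma-1)}{2}$, $a_2=\frac{m(\gamma-1)+mz\gamma(\gamma-3)}{2}$, $a_3=\frac{mz\gamma(\gamma-1)}{2}$, $G(V,C;\gamma,z)=C^2[(m+1)V+2mz]-V(1+V)(\lambda+V)$, $F(V,C;\gamma,z)=C\{C^2[1+\frac{mz}{1+V}]-a_1(1+V)^2+a_2(1+V)-a_3\}$; ODE $\frac{dC}{dV}=\frac FG$. $z_M=(\sqrt\gamma+\sqrt2)^{-2}$; $w(z)=\sqrt{1-2(\gamma+2)z+(\gamma-2)^2z^2}$, $V_8=\frac{-1+(\gamma-2)z+w}{2}$, $C_8=1+V_8$, $P_8=(V_8,C_8)$. The local solution is the real-analytic solution near $V_8$ with $C(V_8)=C_8$ and $C'(V_8)$ equal to the unique negative root of $-G_Cc^2+(F_C-G_V)c+F_V=0$ (partials at $P_8$); it extends as a positive decreasing solution on $[V_8,0)$. $z_2=\frac{\sqrt{33}-3}{6+2\sqrt{33}+4\gamma}$, $\gamma_1=1+\sqrt2$. *)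

theory Defs
  imports "HOL-Analysis.Analysis"
begin

definition lam :: "real \<Rightarrow> real \<Rightarrow> real \<Rightarrow> real" where
  "lam m g z = 1 + m * g * z"

definition a1 :: "real \<Rightarrow> real \<Rightarrow> real \<Rightarrow> real" where
  "a1 m g z = 1 + m * (g - 1) / 2"

definition a2 :: "real \<Rightarrow> real \<Rightarrow> real \<Rightarrow> real" where
  "a2 m g z = (m * (g - 1) + m * z * g * (g - 3)) / 2"

definition a3 :: "real \<Rightarrow> real \<Rightarrow> real \<Rightarrow> real" where
  "a3 m g z = m * z * g * (g - 1) / 2"

definition Gf :: "real \<Rightarrow> real \<Rightarrow> real \<Rightarrow> real \<Rightarrow> real \<Rightarrow> real" where
  "Gf m g z V C = C^2 * ((m + 1) * V + 2 * m * z) - V * (1 + V) * (lam m g z + V)"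

definition Ff :: "real \<Rightarrow> real \<Rightarrow> real \<Rightarrow> real \<Rightarrow> real \<Rightarrow> real" where
  "Ff m g z V C = C * (C^2 * (1 + m * z / (1 + V)) - a1 m g z * (1 + V)^2
                       + a2 m g z * (1 + V) - a3 m g z)"

definition zM :: "real \<Rightarrow> real" where
  "zM g = 1 / (sqrt g + sqrt 2)^2"

definition wf :: "real \<Rightarrow> real \<Rightarrow> real" where
  "wf g z = sqrt (1 - 2 * (g + 2) * z + (g - 2)^2 * z^2)"

definition V8 :: "real \<Rightarrow> real \<Rightarrow> real" where
  "V8 g z = (-1 + (g - 2) * z + wf g z) / 2"

definition C8 :: "real \<Rightarrow> real \<Rightarrow> real" where
  "C8 g z = 1 + V8 g z"

definition z2 :: "real \<Rightarrow> real" where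
  "z2 g = (sqrt 33 - 3) / (6 + 2 * sqrt 33 + 4 * g)"

definition gamma1 :: real where
  "gamma1 = 1 + sqrt 2"

text \<open>The slope of the local solution at P8: the unique negative root c of
  -G_C c^2 + (F_C - G_V) c + F_V = 0, partial derivatives taken at P8.\<close>
definition slope8 :: "real \<Rightarrow> real \<Rightarrow> real \<Rightarrow> real" where
  "slope8 m g z =
     (let V0 = V8 g z; C0 = C8 g z;
          GV = deriv (\<lambda>v. Gf m g z v C0) V0;
          GC = deriv (\<lambda>c. Gf m g z V0 c) C0;
          FV = deriv (\<lambda>v. Ff m g z v C0) V0;
          FC = deriv (\<lambda>c. Ff m g z V0 c) C0
      in THE c. c < 0 \<and> - GC * c^2 + (FC - GV) * c + FV = 0)"

end

theory Submission
  imports Defs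
begin

text \<open>
  Along the solution G stays positive: it never vanishes, and at \<open>V = -mz/(m+1)\<close>, where
  the coefficient of \<open>C\<^sup>2\<close> in G is \<open>mz\<close>, it is positive.
  Next, \<open>F = C (1+V+mz)/(1+V) (C\<^sup>2 - \<Psi>(V))\<close>, and \<open>C\<^sup>2 - \<Psi>\<close> vanishes at \<open>V\<^sub>8\<close>
  with negative slope and has derivative \<open>-\<Psi>' < 0\<close> at any later zero; hence \<open>C\<^sup>2 < \<Psi>\<close>,
  \<open>F < 0\<close> and C decreases below \<open>C\<^sub>8\<close>.
  Finally \<open>H = C\<^sup>2 + 3V/2\<close> is negative at \<open>V\<^sub>8\<close> (this is \<open>2V\<^sub>8\<^sup>2 + 7V\<^sub>8 + 2 < 0\<close>, which
  is what \<open>z > z\<^sub>2\<close> guarantees), and at a zero of H one has \<open>(1+V) G H' = -V q(V)\<close> for an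
  explicit polynomial q; since \<open>C < C\<^sub>8\<close> forces \<open>V > -2C\<^sub>8\<^sup>2/3\<close>, where q is negative,
  H can never become zero.
\<close>

lemma first_zero_after_negative:
  fixes f :: "real \<Rightarrow> real"
  assumes cont: "continuous_on {a..b} f" and "a \<le> b" "f a < 0" "0 \<le> f b"
  obtains t where "a < t" "t \<le> b" "f t = 0" "\<And>y. a \<le> y \<Longrightarrow> y < t \<Longrightarrow> f y < 0"
proof -
  define S where "S = {y \<in> {a..b}. f y = 0}"
  have "\<exists>y\<ge>a. y \<le> b \<and> f y = 0" using IVT'[of f a 0 b] assms \<open>a \<le> b\<close> by auto
  then have "S \<noteq> {}" by (auto simp: S_def)
  moreover have "closed S"
    unfolding S_def by (rule continuous_closed_preimage_constant[OF cont]) simp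
  moreover have bdd: "bdd_below S" unfolding S_def by (rule bdd_belowI[of _ a]) auto
  ultimately have "Inf S \<in> S" by (simp add: closed_contains_Inf)
  then have t: "a < Inf S" "Inf S \<le> b" "f (Inf S) = 0"
    using \<open>f a < 0\<close> by (auto simp: S_def less_le)
  moreover have "f y < 0" if "a \<le> y" "y < Inf S" for y
  proof (rule ccontr)
    assume "\<not> f y < 0"
    have "continuous_on {a..y} f" by (rule continuous_on_subset[OF cont]) (use that t in auto)
    then have "\<exists>u\<ge>a. u \<le> y \<and> f u = 0"
      using IVT'[of f a 0 y] \<open>f a < 0\<close> \<open>\<not> f y < 0\<close> that by auto
    then obtain u where "a \<le> u" "u \<le> y" "f u = 0" by blast
    then have "u \<in> S" using that t by (auto simp: S_def)
    then show False using cInf_lower[OF _ bdd, of u] \<open>u \<le> y\<close> that by simp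
  qed
  ultimately show ?thesis using that by blast
qed

lemma negative_if_decreasing_at_zeros:
  fixes f f' :: "real \<Rightarrow> real"
  assumes deriv: "\<And>x. a < x \<Longrightarrow> x < b \<Longrightarrow> (f has_real_derivative f' x) (at x)"
    and zeros: "\<And>x. a < x \<Longrightarrow> x < b \<Longrightarrow> f x = 0 \<Longrightarrow> f' x < 0"
    and start: "eventually (\<lambda>x. f x < 0) (at_right a)"
    and x: "a < x" "x < b"
  shows "f x < 0"
proof (rule ccontr)
  assume "\<not> f x < 0"
  obtain c where "a < c" and c: "\<And>y. a < y \<Longrightarrow> y < c \<Longrightarrow> f y < 0"
    using start by (auto simp: eventually_at_right_field)
  define x0 where "x0 = (a + min c x) / 2"
  have x0: "a < x0" "x0 < x" "f x0 < 0"
    using \<open>a < c\<close> x c[of x0] by (auto simp: x0_def min_def)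
  have "continuous_on {x0..x} f"
    using deriv x0 x by (intro DERIV_continuous_on[where D = f']) (auto intro: has_field_derivative_at_within)
  moreover have "x0 \<le> x" "0 \<le> f x" using x0 \<open>\<not> f x < 0\<close> by auto
  ultimately obtain t where t: "x0 < t" "t \<le> x" "f t = 0"
    and before_t: "\<And>y. x0 \<le> y \<Longrightarrow> y < t \<Longrightarrow> f y < 0"
    using first_zero_after_negative x0(3) by blast
  \<comment> \<open>at the first zero t the derivative is negative, so f is positive just before t\<close>
  have "f' t < 0" using zeros t x0 x by auto
  then obtain e where e: "e > 0" "\<And>h. 0 < h \<Longrightarrow> h < e \<Longrightarrow> f t < f (t - h)"
    using DERIV_neg_dec_left[OF deriv[of t]] t x0 x by force
  define h where "h = min e (t - x0) / 2"
  have "0 < h" "h < e" "x0 \<le> t - h" using e t by (auto simp: h_def min_def field_simps)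
  then show False using e(2)[of h] before_t[of "t - h"] t by simp
qed

lemma power_series_at_center:
  fixes a :: "nat \<Rightarrow> real" and f :: "real \<Rightarrow> real"
  assumes "e > 0" and sums: "\<And>x. \<bar>x - x0\<bar> < e \<Longrightarrow> (\<lambda>n. a n * (x - x0)^n) sums f x"
  shows "f x0 = a 0" and "(f has_real_derivative a 1) (at x0)"
proof -
  show "f x0 = a 0" using sums[of x0] \<open>e > 0\<close> by simp
  define s where "s = (\<lambda>h. \<Sum>n. a n * h^n)"
  have "summable (\<lambda>n. a n * (e/2)^n)" using sums[of "x0 + e/2"] \<open>e > 0\<close> by (auto simp: sums_iff)
  then have "(s has_real_derivative (\<Sum>n. diffs a n * 0^n)) (at 0)"
    unfolding s_def by (rule termdiffs_strong) (use \<open>e > 0\<close> in auto)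
  then have "(s has_real_derivative a 1) (at (x0 - x0))" by (simp add: diffs_def)
  then have "((\<lambda>x. s (x - x0)) has_real_derivative a 1 * 1) (at x0)"
    by (rule DERIV_chain2) (auto intro!: derivative_eq_intros)
  then have d: "((\<lambda>x. s (x - x0)) has_real_derivative a 1) (at x0)" by simp
  show "(f has_real_derivative a 1) (at x0)"
  proof (rule has_field_derivative_transform_within_open[OF d, of "ball x0 e"])
    show "open (ball x0 e)" "x0 \<in> ball x0 e" using \<open>e > 0\<close> by auto
    fix x assume "x \<in> ball x0 e"
    then show "s (x - x0) = f x"
      using sums[of x] by (simp add: s_def sums_iff dist_real_def abs_minus_commute)
  qed
qed

lemma ex1_negative_root_quadratic:
  fixes a b c :: real
  assumes "a > 0" and "c < 0"
  shows "\<exists>!x. x < 0 \<and> a * x^2 + b * x + c = 0"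
proof -
  have disc: "b^2 < b^2 - 4*a*c" using assms by (simp add: mult_pos_neg)
  define d where "d = sqrt (b^2 - 4*a*c)"
  have "0 \<le> b^2 - 4*a*c" using disc zero_le_power2[of b] by linarith
  then have d2: "d^2 = b^2 - 4*a*c" unfolding d_def by simp
  have "\<bar>b\<bar> < d" unfolding d_def using disc by (metis real_sqrt_abs real_sqrt_less_mono)
  define x0 where "x0 = (- b - d) / (2*a)"
  have "x0 < 0" unfolding x0_def using \<open>\<bar>b\<bar> < d\<close> assms by (simp add: divide_neg_pos)
  moreover have root: "a * x0^2 + b * x0 + c = 0"
  proof -
    have "a * x0^2 + b * x0 + c = (d^2 - b^2 + 4*a*c) / (4*a)"
      unfolding x0_def using assms by (simp add: field_simps power2_eq_square; simp add: algebra_simps)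
    then show ?thesis using d2 by simp
  qed
  moreover have "x = x0" if "x < 0" "a * x^2 + b * x + c = 0" for x
  proof (rule ccontr)
    assume "x \<noteq> x0"
    \<comment> \<open>two distinct roots have product \<open>c/a < 0\<close>, so they cannot both be negative\<close>
    have "(x - x0) * (a * (x + x0) + b) = 0"
      using that(2) root by (simp add: algebra_simps power2_eq_square)
    then have sum: "a * (x + x0) + b = 0" using \<open>x \<noteq> x0\<close> by simp
    have "a * x^2 + b * x = x * (a * x + b)" by (simp add: algebra_simps power2_eq_square)
    also have "a * x + b = - a * x0" using sum by (simp add: algebra_simps)
    finally have "a * x * x0 = c" using that(2) by (simp add: algebra_simps)
    moreover have "0 < a * (x * x0)" using assms \<open>x0 < 0\<close> that(1) by (simp add: mult_neg_neg)
    ultimately show False using assms by (simp add: mult.assoc)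
  qed
  ultimately show ?thesis by blast
qed

section \<open>The parameter range\<close>

lemma discriminant_factorization:
  fixes a b g z :: real
  assumes "a^2 = g" "b^2 = 2"
  shows "1 - 2*(g+2)*z + (g-2)^2*z^2 = (1 - z*(a+b)^2) * (1 - z*(a-b)^2)"
proof -
  have aa: "a*a = g" "b*b = 2" using assms by (simp_all add: power2_eq_square)
  have sum: "(a+b)^2 + (a-b)^2 = 2*g + 4" using aa by (simp add: power2_eq_square algebra_simps)
  have "(a+b)*(a-b) = g - 2" using aa by (simp add: algebra_simps)
  then have prod: "(a+b)^2 * (a-b)^2 = (g-2)^2" by (metis power_mult_distrib)
  have "(1 - z*(a+b)^2) * (1 - z*(a-b)^2) = 1 - z*((a+b)^2 + (a-b)^2) + z^2*((a+b)^2*(a-b)^2)"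
    by (simp add: algebra_simps power2_eq_square)
  then show ?thesis unfolding sum prod by (simp add: algebra_simps)
qed

lemma zM_lt:
  assumes "12/5 < g"
  shows "zM g < 3/25"
proof -
  have "7/5 < sqrt (2::real)" by (rule real_less_rsqrt) (simp add: power2_eq_square)
  moreover have "3/2 < sqrt g" by (rule real_less_rsqrt) (use assms in \<open>simp add: power2_eq_square\<close>)
  ultimately have "(29/10)^2 < (sqrt g + sqrt 2)^2" by (intro power_strict_mono) auto
  then show ?thesis unfolding zM_def by (simp add: divide_simps power2_eq_square)
qed

lemma gamma1_gt: "12/5 < gamma1"
proof -
  have "7/5 < sqrt (2::real)" by (rule real_less_rsqrt) (simp add: power2_eq_square)
  then show ?thesis unfolding gamma1_def by simp
qed

lemma z2_pos:
  assumes "0 < g"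
  shows "0 < z2 g"
proof -
  have "3 < sqrt (33::real)" by (rule real_less_rsqrt) simp
  then show ?thesis unfolding z2_def using assms by (simp add: add_pos_pos)
qed

lemma discriminant_nonneg:
  assumes "0 < g" "0 < z" "z \<le> zM g"
  shows "0 \<le> 1 - 2*(g+2)*z + (g-2)^2*z^2"
proof -
  define A where "A = (sqrt g + sqrt 2)^2"
  define B where "B = (sqrt g - sqrt 2)^2"
  have "0 < sqrt g + sqrt 2" using assms by (simp add: add_pos_pos)
  then have "0 < A" unfolding A_def by simp
  then have "z * A \<le> 1" using assms by (simp add: zM_def A_def field_simps)
  moreover have "B \<le> A" unfolding A_def B_def using assms by (simp add: power2_eq_square algebra_simps)
  ultimately have "z * B \<le> 1" using assms by (meson mult_left_mono order_trans less_imp_le)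
  then have "0 \<le> (1 - z*A) * (1 - z*B)" using \<open>z * A \<le> 1\<close> by simp
  also have "\<dots> = 1 - 2*(g+2)*z + (g-2)^2*z^2"
    unfolding A_def B_def using assms by (intro discriminant_factorization[symmetric]) auto
  finally show ?thesis .
qed

lemma wf_squared:
  assumes "0 < g" "0 < z" "z \<le> zM g"
  shows "(wf g z)^2 = 1 - 2*(g+2)*z + (g-2)^2*z^2"
  unfolding wf_def using discriminant_nonneg[OF assms] by simp

lemma V8_root:
  assumes "0 < g" "0 < z" "z \<le> zM g"
  shows "z * ((g-2) * V8 g z - 2) = V8 g z * (1 + V8 g z)"
proof -
  have "z * ((g-2) * V8 g z - 2) - V8 g z * (1 + V8 g z)
      = ((1 - 2*(g+2)*z + (g-2)^2*z^2) - (wf g z)^2) / 4"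
    unfolding V8_def by (simp add: field_simps power2_eq_square)
  then show ?thesis using wf_squared[OF assms] by simp
qed

lemma V8_gt:
  assumes "2 < g" "0 < z" "z \<le> zM g"
  shows "-1/2 < V8 g z"
proof -
  have "0 \<le> wf g z" unfolding wf_def using assms discriminant_nonneg by simp
  moreover have "0 < (g-2)*z" using assms by simp
  ultimately show ?thesis unfolding V8_def by simp
qed

lemma sqrt_33_bounds: "57/10 < sqrt (33::real)" "sqrt (33::real) < 23/4"
proof -
  show "57/10 < sqrt (33::real)" by (rule real_less_rsqrt) (simp add: power2_eq_square)
  have "sqrt (33::real) < sqrt ((23/4)^2)" by (rule real_sqrt_less_mono) (simp add: power2_eq_square)
  then show "sqrt (33::real) < 23/4" by simp
qed

text \<open>\<open>z > z\<^sub>2\<close> is equivalent to \<open>V\<^sub>8 < (\<surd>33 - 7)/4\<close>, the larger root of \<open>2V\<^sup>2 + 7V + 2\<close>.\<close>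

lemma V8_lt:
  assumes "12/5 < g" "g \<le> 3" "z2 g < z" "z < 3/25" "z \<le> zM g"
  shows "V8 g z < (sqrt 33 - 7) / 4"
proof -
  define r where "r = sqrt (33::real)"
  have r: "57/10 < r" "r < 23/4" "r^2 = 33" unfolding r_def using sqrt_33_bounds by auto
  define a where "a = (r - 5)/2"
  define k where "k = 2*(g+2) - 2*a*(g-2)"
  have "0 < z" using assms z2_pos[of g] by simp
  have "(r - 5)*(g-2) \<le> (3/4)*(g-2)" using r assms by (intro mult_right_mono) auto
  then have "0 < k" unfolding k_def a_def using assms by (simp add: algebra_simps)
  have "(1 - a^2) * (6 + 2*r + 4*g) - (r - 3) * k = (r^2 - 33)*(3 - r)/2"
    unfolding a_def k_def by (simp add: field_simps power2_eq_square; simp add: algebra_simps)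
  then have "z2 g * k = 1 - a^2"
    using r assms unfolding z2_def r_def[symmetric] by (simp add: field_simps)
  then have zk: "1 - a^2 < z * k" using assms \<open>0 < k\<close> by (metis mult_strict_right_mono)
  have "(g-2)*z \<le> 1 * (3/25)" using assms \<open>0 < z\<close> by (intro mult_mono) auto
  then have R: "0 < a - (g-2)*z" unfolding a_def using r by simp
  have "(wf g z)^2 < (a - (g-2)*z)^2"
    using zk assms \<open>0 < z\<close> wf_squared[of g z] by (simp add: k_def power2_eq_square algebra_simps)
  then have "wf g z < a - (g-2)*z" using R by (meson less_imp_le power_less_imp_less_base)
  then show ?thesis unfolding V8_def a_def r_def by (simp add: field_simps)
qed

lemma V8_window:
  assumes "gamma1 < g" "g \<le> 3" "z2 g < z" "z \<le> zM g"
  shows "12/5 < g" "0 < z" "z < 3/25"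
    and "z * ((g-2) * V8 g z - 2) = V8 g z * (1 + V8 g z)"
    and "-1/2 < V8 g z" "V8 g z < -3/10" "2 * (V8 g z)^2 + 7 * V8 g z + 2 < 0"
proof -
  show g: "12/5 < g" using assms gamma1_gt by simp
  show z: "0 < z" using assms z2_pos[of g] g by simp
  show "z < 3/25" using assms zM_lt[OF g] by simp
  show "z * ((g-2) * V8 g z - 2) = V8 g z * (1 + V8 g z)" using V8_root assms g z by simp
  show lo: "-1/2 < V8 g z" using V8_gt g z assms by simp
  define r where "r = sqrt (33::real)"
  have r: "57/10 < r" "r < 23/4" "r^2 = 33" using sqrt_33_bounds by (auto simp: r_def)
  have hi: "4 * V8 g z < r - 7" using V8_lt assms g z \<open>z < 3/25\<close> by (simp add: r_def field_simps)
  then show "V8 g z < -3/10" using r by simp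
  have "8 * (2 * (V8 g z)^2 + 7 * V8 g z + 2) = (4 * V8 g z + 7 - r) * (4 * V8 g z + 7 + r)"
    using r(3) by (simp add: algebra_simps power2_eq_square)
  moreover have "(4 * V8 g z + 7 - r) * (4 * V8 g z + 7 + r) < 0"
    using hi lo r by (intro mult_neg_pos) linarith+
  ultimately show "2 * (V8 g z)^2 + 7 * V8 g z + 2 < 0" by simp
qed

lemma a1_pos_a2_lt:
  assumes "0 < m" "1 < g" "g \<le> 3" "0 \<le> z"
  shows "0 < a1 m g z" "a2 m g z < a1 m g z"
proof -
  have "0 < m*(g-1)" using assms by simp
  then show "0 < a1 m g z" unfolding a1_def by simp
  have "m*z*g*(g-3) \<le> 0" using assms by (simp add: mult_nonneg_nonpos)
  then show "a2 m g z < a1 m g z" unfolding a1_def a2_def by (simp add: field_simps)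
qed

lemma slope8_neg:
  assumes m: "1 \<le> m" "m \<le> 2" and g: "12/5 < g" "g \<le> 3" and z: "0 < z" "z < 3/25"
    and V8: "-1/2 < V8 g z" "V8 g z < -3/10"
  shows "slope8 m g z < 0"
proof -
  define p where "p = V8 g z"
  have C8: "C8 g z = 1 + p" and "0 < 1 + p" using V8 by (simp_all add: C8_def p_def)
  have GC: "deriv (\<lambda>c. Gf m g z p c) (1 + p) = 2*(1+p)*((m+1)*p + 2*m*z)"
    unfolding Gf_def by (rule DERIV_imp_deriv) (auto intro!: derivative_eq_intros)
  have "((\<lambda>v. Ff m g z v c) has_real_derivative
      c * (c^2 * (- (m*z) / (1+p)^2) - 2*a1 m g z*(1+p) + a2 m g z)) (at p)" for c
    unfolding Ff_def using \<open>0 < 1 + p\<close>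
    by (auto intro!: derivative_eq_intros simp: field_simps power2_eq_square)
  from this[of "1+p"]
  have FV: "deriv (\<lambda>v. Ff m g z v (1+p)) p = (1+p) * (- m*z - 2*a1 m g z*(1+p) + a2 m g z)"
    using \<open>0 < 1 + p\<close> by (simp add: DERIV_imp_deriv)
  have "(m+1)*p \<le> 2*p" using m V8 by (intro mult_right_mono_neg) (auto simp: p_def)
  moreover have "2*m*z < 2*2*(3/25)" using m z by (intro mult_le_less_imp_less) auto
  ultimately have "(m+1)*p + 2*m*z < 0" using V8 unfolding p_def by linarith
  then have GC_neg: "deriv (\<lambda>c. Gf m g z p c) (1 + p) < 0"
    unfolding GC using \<open>0 < 1 + p\<close> by (simp add: mult_pos_neg)
  have a: "0 < a1 m g z" "a2 m g z < a1 m g z" using a1_pos_a2_lt m g z by auto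
  then have "a1 m g z \<le> 2*a1 m g z*(1+p)" using V8 by (simp add: p_def)
  moreover have "0 < m*z" using m z by simp
  ultimately have "- m*z - 2*a1 m g z*(1+p) + a2 m g z < 0" using a by linarith
  then have FV_neg: "deriv (\<lambda>v. Ff m g z v (1+p)) p < 0"
    unfolding FV using \<open>0 < 1 + p\<close> by (simp add: mult_pos_neg)
  let ?root = "\<lambda>c. c < 0 \<and> - deriv (\<lambda>c. Gf m g z p c) (1+p) * c^2
    + (deriv (\<lambda>c. Ff m g z p c) (1+p) - deriv (\<lambda>v. Gf m g z v (1+p)) p) * c
    + deriv (\<lambda>v. Ff m g z v (1+p)) p = 0"
  have "\<exists>!c. ?root c"
    using GC_neg FV_neg by (intro ex1_negative_root_quadratic) auto
  then have "?root (THE c. ?root c)" by (rule theI')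
  moreover have "slope8 m g z = (THE c. ?root c)"
    unfolding slope8_def Let_def p_def[symmetric] C8 ..
  ultimately show ?thesis by simp
qed

section \<open>The functions \<open>\<Psi>\<close> and \<open>q\<close>\<close>

definition Pq :: "real \<Rightarrow> real \<Rightarrow> real \<Rightarrow> real \<Rightarrow> real" where
  "Pq m g z V = a1 m g z * (1+V)^2 - a2 m g z * (1+V) + a3 m g z"

text \<open>\<open>F\<close> vanishes (for \<open>C > 0\<close>) exactly on the curve \<open>C\<^sup>2 = \<Psi>(V)\<close>.\<close>

definition Psi :: "real \<Rightarrow> real \<Rightarrow> real \<Rightarrow> real \<Rightarrow> real" where
  "Psi m g z V = Pq m g z V * (1 - m*z/(1+V+m*z))"

definition Psi' :: "real \<Rightarrow> real \<Rightarrow> real \<Rightarrow> real \<Rightarrow> real" where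
  "Psi' m g z V = Pq m g z V * (m*z/(1+V+m*z)^2) + (2*a1 m g z*(1+V) - a2 m g z) * (1 - m*z/(1+V+m*z))"

definition qf :: "real \<Rightarrow> real \<Rightarrow> real \<Rightarrow> real \<Rightarrow> real" where
  "qf m g z V = 3*(-3/2*V*(1+V+m*z) - (1+V)*Pq m g z V)
      + 3/2*(3/2*((m+1)*V + 2*m*z) + (1+V)*(lam m g z + V))*(1+V)"

lemma Ff_eq_Psi:
  assumes "0 < 1+V" "0 < 1+V+m*z"
  shows "Ff m g z V c = c * ((1+V+m*z)/(1+V)) * (c^2 - Psi m g z V)"
proof -
  define X Y where "X = (1+V+m*z)/(1+V)" and "Y = (1+V)/(1+V+m*z)"
  have X: "1 + m*z/(1+V) = X" and Y: "1 - m*z/(1+V+m*z) = Y"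
    using assms by (simp_all add: X_def Y_def field_simps)
  have "X * Y = 1" using assms by (simp add: X_def Y_def)
  have Ff: "Ff m g z V c = c * (c^2 * X - Pq m g z V)" and Psi: "Psi m g z V = Pq m g z V * Y"
    unfolding Ff_def Pq_def Psi_def X Y by (simp_all add: algebra_simps)
  have "c * X * (c^2 - Psi m g z V) = c * (c^2 * X) - c * Pq m g z V * (X * Y)"
    unfolding Psi by (simp add: algebra_simps)
  also have "\<dots> = Ff m g z V c" by (simp add: \<open>X * Y = 1\<close> Ff right_diff_distrib)
  finally show ?thesis by (simp add: X_def)
qed

lemma Pq_V8:
  assumes root: "z * ((g-2)*p - 2) = p * (1+p)" and "0 < 1+p"
  shows "Pq m g z p = (1+p) * (1+p+m*z)"
proof -
  have "(Pq m g z p - (1+p)*(1+p+m*z)) * (1+p) = m*(g-1)/2*(1+p)*(p*(1+p) - z*((g-2)*p - 2))"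
    unfolding Pq_def a1_def a2_def a3_def by (simp add: field_simps power2_eq_square; simp add: algebra_simps)
  also have "\<dots> = 0" using root by simp
  finally show ?thesis using \<open>0 < 1+p\<close> by simp
qed

lemma Psi_V8:
  assumes root: "z * ((g-2)*p - 2) = p * (1+p)" and "0 < 1+p" "0 < 1+p+m*z"
  shows "Psi m g z p = (1+p)^2"
  unfolding Psi_def Pq_V8[OF assms(1,2)] using assms(2,3) by (simp add: field_simps power2_eq_square)

lemma has_real_derivative_Psi:
  assumes "0 < 1+V+m*z"
  shows "(Psi m g z has_real_derivative Psi' m g z V) (at V)"
proof -
  have "(Pq m g z has_real_derivative 2*a1 m g z*(1+V) - a2 m g z) (at V)"
    unfolding Pq_def[abs_def] by (auto intro!: derivative_eq_intros simp: algebra_simps)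
  moreover have "((\<lambda>V. 1 - m*z/(1+V+m*z)) has_real_derivative m*z/(1+V+m*z)^2) (at V)"
    using assms by (auto intro!: derivative_eq_intros simp: field_simps power2_eq_square)
  ultimately show ?thesis
    unfolding Psi_def[abs_def] Psi'_def by (rule DERIV_mult')
qed

lemma Psi'_pos:
  assumes m: "0 < m" and g: "1 < g" "g \<le> 3" and z: "0 < z"
    and V: "-1/2 < p" "p \<le> V" and Pq_p: "0 < Pq m g z p"
  shows "0 < Psi' m g z V"
proof -
  have "0 < m*z" using m z by simp
  have a: "0 < a1 m g z" "a2 m g z < a1 m g z" using a1_pos_a2_lt m g z by auto
  have "0 \<le> a1 m g z*(1 + 2*V)" "0 \<le> a1 m g z*(1+V+p)" using a V by simp_all
  then have "0 < 2*a1 m g z*(1+V) - a2 m g z" "0 \<le> a1 m g z*(2+V+p) - a2 m g z"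
    using a by (simp_all add: algebra_simps)
  then have "0 < 2*a1 m g z*(1+V) - a2 m g z" "0 \<le> (V - p)*(a1 m g z*(2+V+p) - a2 m g z)"
    using V by simp_all
  moreover have "Pq m g z V - Pq m g z p = (V - p)*(a1 m g z*(2+V+p) - a2 m g z)"
    unfolding Pq_def by (simp add: algebra_simps power2_eq_square)
  moreover have "0 < 1 - m*z/(1+V+m*z)"
  proof -
    have "0 < 1+V" "0 < 1+V+m*z" using \<open>0 < m*z\<close> V by simp_all
    then show ?thesis by (simp add: field_simps)
  qed
  ultimately show ?thesis
    unfolding Psi'_def using Pq_p m z by (auto intro!: add_nonneg_pos mult_nonneg_nonneg)
qed

text \<open>On the parabola \<open>C\<^sup>2 = -3V/2\<close> the derivative of \<open>C\<^sup>2 + 3V/2\<close> is \<open>(2CF + 3G/2)/G\<close>.\<close>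

lemma parabola_numerator:
  assumes "0 < 1+V" "c^2 = -3/2*V"
  shows "(1+V)*(2*c*Ff m g z V c + 3/2*Gf m g z V c) = -V * qf m g z V"
proof -
  have cc: "c*c = -3/2*V" using assms by (simp add: power2_eq_square)
  have "(1+V)*(2*c*Ff m g z V c + 3/2*Gf m g z V c)
     = (1+V)*(2*(c*c)*((c*c)*(1 + m*z/(1+V)) - Pq m g z V)
         + 3/2*((c*c)*((m+1)*V + 2*m*z) - V*(1+V)*(lam m g z + V)))"
    unfolding Ff_def Gf_def Pq_def by (simp add: power2_eq_square algebra_simps)
  also have "\<dots> = -V * qf m g z V"
    unfolding cc qf_def using assms(1) by (simp add: field_simps; simp add: algebra_simps power2_eq_square)
  finally show ?thesis .
qed

lemma qf1_expand:
  "qf 1 g z V = - 3/2 - 3*V - 3/2*V*g - 9/2*V*g*z + 3/2*V*g^2*z - 3/2*V^2 - 3*V^2*g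
     - 3*V^2*g*z + 3/2*V^2*g^2*z - 3/2*V^3*g - 3/2*g*z + 9/2*z"
  unfolding qf_def Pq_def lam_def a1_def a2_def a3_def
  by (simp add: field_simps power2_eq_square power3_eq_cube; simp add: algebra_simps)

lemma qf2_expand:
  "qf 2 g z V = - 3/2 + 3/4*V - 3*V*g - 9*V*g*z + 3*V*g^2*z + 15/4*V^2 - 6*V^2*g
     - 6*V^2*g*z + 3*V^2*g^2*z + 3/2*V^3 - 3*V^3*g - 3*g*z + 9*z"
  unfolding qf_def Pq_def lam_def a1_def a2_def a3_def
  by (simp add: field_simps power2_eq_square power3_eq_cube; simp add: algebra_simps)

text \<open>The sign certificates below expand a polynomial around a corner of a box and bound every
  monomial with a negative coefficient by its value at the opposite corner.\<close>

lemma monomial2_le_box: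
  fixes x y a b :: real
  assumes "0 \<le> x" "x \<le> a" "0 \<le> y" "y \<le> b"
  shows "0 \<le> x^i * y^j" "x^i * y^j \<le> a^i * b^j"
  using assms by (simp, intro mult_mono power_mono) auto

lemma monomial3_le_box:
  fixes x y w a b c :: real
  assumes "0 \<le> x" "x \<le> a" "0 \<le> y" "y \<le> b" "0 \<le> w" "w \<le> c"
  shows "0 \<le> x^i * y^j * w^k" "x^i * y^j * w^k \<le> a^i * b^j * c^k"
  using assms by (simp, intro mult_mono power_mono) auto

lemmas monomial_bound_simps = power_one_right power_0 mult_1_right mult_1_left power_divide power_one
  power_numeral Num.pow.simps Num.sqr.simps Num.mult_num_simps Num.add_num_simps numeral_times_numeral

lemma qf1_deriv_neg:
  assumes "-33/100 \<le> V" "V \<le> 0" "12/5 \<le> g" "g \<le> 3" "0 \<le> z" "z \<le> 3/25"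
  shows "\<exists>d. (qf 1 g z has_real_derivative d) (at V) \<and> d < 0"
proof -
  define d where "d = - (3 + 3*V + 6*V*g + 6*V*g*z - 3*V*g^2*z + 9/2*V^2*g + 3/2*g + 9/2*g*z - 3/2*g^2*z)"
  have "(qf 1 g z has_real_derivative d) (at V)"
    unfolding qf1_expand[abs_def] d_def by (auto intro!: derivative_eq_intros simp: algebra_simps)
  moreover have "d < 0"
  proof (cases "V \<le> -33/200")
    case True
    define u y where "u = V + 33/100" and "y = g - 12/5"
    have b: "0 \<le> z^i * u^j * y^k" "z^i * u^j * y^k \<le> (3/25)^i * (33/200)^j * (3/5)^k" for i j k
      using monomial3_le_box[of z "3/25" u "33/200" y "3/5"] assms True by (auto simp: u_def y_def)
    have "-d = 50853/25000 + 1944/625*z - 72/25*z*u - 42/5*z*u*y - 3*z*u*y^2 + 9/125*z*y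
        - 51/100*z*y^2 + 1284/125*u + 303/100*u*y + 54/5*u^2 + 9/2*u^2*y + 201/20000*y"
      unfolding d_def u_def y_def by algebra
    then show ?thesis
      using b[of 1 0 0] b[of 1 1 0] b[of 1 1 1] b[of 1 1 2] b[of 1 0 1] b[of 1 0 2]
        b[of 0 1 0] b[of 0 1 1] b[of 0 2 0] b[of 0 2 1] b[of 0 0 1]
      by (simp only: monomial_bound_simps)
  next
    case False
    define u y where "u = V + 33/200" and "y = g - 12/5"
    have b: "0 \<le> z^i * u^j * y^k" "z^i * u^j * y^k \<le> (3/25)^i * (33/200)^j * (3/5)^k" for i j k
      using monomial3_le_box[of z "3/25" u "33/200" y "3/5"] assms False by (auto simp: u_def y_def)
    have "-d = 402303/100000 + 1647/625*z - 72/25*z*u - 42/5*z*u*y - 3*z*u*y^2 - 657/500*z*y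
        - 201/200*z*y^2 + 3459/250*u + 903/200*u*y + 54/5*u^2 + 9/2*u^2*y + 50601/80000*y"
      unfolding d_def u_def y_def by algebra
    then show ?thesis
      using b[of 1 0 0] b[of 1 1 0] b[of 1 1 1] b[of 1 1 2] b[of 1 0 1] b[of 1 0 2]
        b[of 0 1 0] b[of 0 1 1] b[of 0 2 0] b[of 0 2 1] b[of 0 0 1]
      by (simp only: monomial_bound_simps)
  qed
  ultimately show ?thesis by blast
qed

lemma qf2_deriv_neg:
  assumes "-33/100 \<le> V" "V \<le> 0" "12/5 \<le> g" "g \<le> 3" "0 \<le> z" "z \<le> 3/25"
  shows "\<exists>d. (qf 2 g z has_real_derivative d) (at V) \<and> d < 0"
proof -
  define d where "d = - (- 3/4 - 15/2*V + 12*V*g + 12*V*g*z - 6*V*g^2*z - 9/2*V^2 + 9*V^2*g + 3*g + 9*g*z - 3*g^2*z)"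
  have "(qf 2 g z has_real_derivative d) (at V)"
    unfolding qf2_expand[abs_def] d_def by (auto intro!: derivative_eq_intros simp: algebra_simps)
  moreover have "d < 0"
  proof (cases "V \<le> -33/200")
    case True
    define u y where "u = V + 33/100" and "y = g - 12/5"
    have b: "0 \<le> z^i * u^j * y^k" "z^i * u^j * y^k \<le> (3/25)^i * (33/200)^j * (3/5)^k" for i j k
      using monomial3_le_box[of z "3/25" u "33/200" y "3/5"] assms True by (auto simp: u_def y_def)
    have "-d = 128319/100000 + 3888/625*z - 144/25*z*u - 84/5*z*u*y - 6*z*u*y^2 + 18/125*z*y
        - 51/50*z*y^2 + 5007/500*u + 303/50*u*y + 171/10*u^2 + 9*u^2*y + 201/10000*y"
      unfolding d_def u_def y_def by algebra
    then show ?thesis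
      using b[of 1 0 0] b[of 1 1 0] b[of 1 1 1] b[of 1 1 2] b[of 1 0 1] b[of 1 0 2]
        b[of 0 1 0] b[of 0 1 1] b[of 0 2 0] b[of 0 2 1] b[of 0 0 1]
      by (simp only: monomial_bound_simps)
  next
    case False
    define u y where "u = V + 33/200" and "y = g - 12/5"
    have b: "0 \<le> z^i * u^j * y^k" "z^i * u^j * y^k \<le> (3/25)^i * (33/200)^j * (3/5)^k" for i j k
      using monomial3_le_box[of z "3/25" u "33/200" y "3/5"] assms False by (auto simp: u_def y_def)
    have "-d = 1360419/400000 + 3294/625*z - 144/25*z*u - 84/5*z*u*y - 6*z*u*y^2 - 657/250*z*y
        - 201/100*z*y^2 + 15657/1000*u + 903/100*u*y + 171/10*u^2 + 9*u^2*y + 50601/40000*y"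
      unfolding d_def u_def y_def by algebra
    then show ?thesis
      using b[of 1 0 0] b[of 1 1 0] b[of 1 1 1] b[of 1 1 2] b[of 1 0 1] b[of 1 0 2]
        b[of 0 1 0] b[of 0 1 1] b[of 0 2 0] b[of 0 2 1] b[of 0 0 1]
      by (simp only: monomial_bound_simps)
  qed
  ultimately show ?thesis by blast
qed

lemma qf_strict_antimono:
  assumes m: "m = 1 \<or> m = 2" and "12/5 \<le> g" "g \<le> 3" "0 \<le> z" "z \<le> 3/25"
    and "-33/100 \<le> V" "V < W" "W \<le> 0"
  shows "qf m g z W < qf m g z V"
  using \<open>V < W\<close>
proof (rule DERIV_neg_imp_decreasing)
  fix x assume "V \<le> x" "x \<le> W"
  then show "\<exists>d. (qf m g z has_real_derivative d) (at x) \<and> d < 0"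
    using m assms qf1_deriv_neg[of x g z] qf2_deriv_neg[of x g z] by auto
qed

text \<open>The parabola \<open>C\<^sup>2 = -3V/2\<close> meets the level \<open>C = C\<^sub>8 = 1 + V\<^sub>8\<close> at \<open>V = -2(1+V\<^sub>8)\<^sup>2/3\<close>.
  Modulo the quadratic relation satisfied by \<open>V\<^sub>8\<close>, the value of q there factors through
  \<open>2V\<^sub>8\<^sup>2 + 7V\<^sub>8 + 2\<close>.\<close>

definition crossing_cofactor1 :: "real \<Rightarrow> real \<Rightarrow> real" where
  "crossing_cofactor1 g p = - 1/6 + 1/9*g - 17/18*g*p + 10/9*g*p^2 + 31/9*g*p^3 + 20/9*g*p^4
     + 4/9*g*p^5 + 1/9*g^2*p - 2/9*g^2*p^2 - g^2*p^3 - 8/9*g^2*p^4 - 2/9*g^2*p^5 - 1/2*p - p^2 - 2/3*p^3"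

definition crossing_cofactor2 :: "real \<Rightarrow> real \<Rightarrow> real" where
  "crossing_cofactor2 g p = - 7/9 + 2/9*g - 5/3*g*p + 23/18*g*p^2 + 59/9*g*p^3 + 5*g*p^4
     + 10/9*g*p^5 + 2/9*g^2*p - 4/9*g^2*p^2 - 2*g^2*p^3 - 16/9*g^2*p^4 - 4/9*g^2*p^5 + 4/9*p
     + 5/9*p^2 - 16/9*p^3 - 14/9*p^4 - 4/9*p^5"

lemma qf1_at_crossing:
  assumes "z * ((g-2)*p - 2) = p * (1+p)"
  shows "((g-2)*p - 2) * qf 1 g z (-(2/3)*(1+p)^2) = - (2*p^2 + 7*p + 2) * crossing_cofactor1 g p"
  using assms unfolding qf1_expand crossing_cofactor1_def by algebra

lemma qf2_at_crossing:
  assumes "z * ((g-2)*p - 2) = p * (1+p)"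
  shows "((g-2)*p - 2) * qf 2 g z (-(2/3)*(1+p)^2) = - (2*p^2 + 7*p + 2) * crossing_cofactor2 g p"
  using assms unfolding qf2_expand crossing_cofactor2_def by algebra

lemma crossing_cofactor1_pos:
  assumes "-1/2 \<le> p" "p \<le> -3/10" "12/5 \<le> g" "g \<le> 3"
  shows "0 < crossing_cofactor1 g p"
proof -
  define x y where "x = p + 1/2" and "y = g - 12/5"
  have b: "0 \<le> x^i * y^j" "x^i * y^j \<le> (1/5)^i * (3/5)^j" for i j
    using monomial2_le_box[of x "1/5" y "3/5"] assms by (auto simp: x_def y_def)
  have "crossing_cofactor1 g p = 21/20 - 98/75*x - 29/45*x*y - 1/24*x*y^2 - 134/75*x^2
      - 19/90*x^2*y + 2/9*x^2*y^2 + 22/25*x^3 + 53/45*x^3*y + 2/9*x^3*y^2 + 56/75*x^4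
      - 22/45*x^4*y - 1/3*x^4*y^2 - 16/75*x^5 - 28/45*x^5*y - 2/9*x^5*y^2 + 7/18*y - 5/144*y^2"
    unfolding crossing_cofactor1_def x_def y_def by algebra
  then show ?thesis
    using b[of 1 0] b[of 1 1] b[of 1 2] b[of 2 0] b[of 2 1] b[of 2 2] b[of 3 0] b[of 3 1]
      b[of 3 2] b[of 4 0] b[of 4 1] b[of 4 2] b[of 5 0] b[of 5 1] b[of 5 2] b[of 0 1] b[of 0 2]
    by (simp only: monomial_bound_simps)
qed

lemma crossing_cofactor2_pos:
  assumes "-1/2 \<le> p" "p \<le> -3/10" "12/5 \<le> g" "g \<le> 3"
  shows "0 < crossing_cofactor2 g p"
proof -
  define x y where "x = p + 1/2" and "y = g - 12/5"
  have b: "0 \<le> x^i * y^j" "x^i * y^j \<le> (1/5)^i * (3/5)^j" for i j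
    using monomial2_le_box[of x "1/5" y "3/5"] assms by (auto simp: x_def y_def)
  have "crossing_cofactor2 g p = 79/90 - 1547/900*x - 209/360*x*y - 1/12*x*y^2 - 419/225*x^2
      - 14/45*x^2*y + 4/9*x^2*y^2 + 266/225*x^3 + 22/15*x^3*y + 4/9*x^3*y^2 + 236/225*x^4
      - 44/45*x^4*y - 2/3*x^4*y^2 - 76/225*x^5 - 46/45*x^5*y - 4/9*x^5*y^2 + 1/2*y - 5/72*y^2"
    unfolding crossing_cofactor2_def x_def y_def by algebra
  then show ?thesis
    using b[of 1 0] b[of 1 1] b[of 1 2] b[of 2 0] b[of 2 1] b[of 2 2] b[of 3 0] b[of 3 1]
      b[of 3 2] b[of 4 0] b[of 4 1] b[of 4 2] b[of 5 0] b[of 5 1] b[of 5 2] b[of 0 1] b[of 0 2]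
    by (simp only: monomial_bound_simps)
qed

lemma qf_neg:
  assumes m: "m = 1 \<or> m = 2" and g: "12/5 < g" "g \<le> 3" and z: "0 < z" "z < 3/25"
    and p: "-1/2 < p" "p < -3/10" "2*p^2 + 7*p + 2 < 0"
    and root: "z * ((g-2)*p - 2) = p * (1+p)"
    and V: "-(2/3)*(1+p)^2 < V" "V < 0"
  shows "qf m g z V < 0"
proof -
  define Vc where "Vc = -(2/3)*(1+p)^2"
  have "(1+p)^2 \<le> (7/10)^2" using p by (intro power_mono) auto
  then have "-33/100 \<le> Vc" unfolding Vc_def by (simp add: power2_eq_square)
  then have "qf m g z V < qf m g z Vc"
    using m g z V by (intro qf_strict_antimono) (auto simp: Vc_def)
  moreover have "0 < crossing_cofactor1 g p" "0 < crossing_cofactor2 g p"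
    using p g by (auto intro!: crossing_cofactor1_pos crossing_cofactor2_pos)
  then have "0 < ((g-2)*p - 2) * qf m g z Vc"
    using m p qf1_at_crossing[OF root] qf2_at_crossing[OF root]
    by (auto simp: Vc_def intro!: mult_neg_pos)
  moreover have "(g-2)*p \<le> 0" using g p by (intro mult_nonneg_nonpos) auto
  ultimately show ?thesis by (simp add: zero_less_mult_iff)
qed

section \<open>The solution through \<open>P\<^sub>8\<close>\<close>

locale P8_solution =
  fixes m g z :: real and C :: "real \<Rightarrow> real"
  assumes m: "m = 1 \<or> m = 2"
    and g: "12/5 < g" "g \<le> 3"
    and z: "0 < z" "z < 3/25"
    and V8_root: "z * ((g-2) * V8 g z - 2) = V8 g z * (1 + V8 g z)"
    and V8_window: "-1/2 < V8 g z" "V8 g z < -3/10" "2 * (V8 g z)^2 + 7 * V8 g z + 2 < 0"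
    and C_V8: "C (V8 g z) = C8 g z"
    and C_deriv_V8: "(C has_real_derivative slope8 m g z) (at (V8 g z))"
    and C_pos: "\<And>V. V8 g z \<le> V \<Longrightarrow> V < 0 \<Longrightarrow> 0 < C V"
    and G_nonzero: "\<And>V. V8 g z < V \<Longrightarrow> V < 0 \<Longrightarrow> Gf m g z V (C V) \<noteq> 0"
    and C_deriv: "\<And>V. V8 g z < V \<Longrightarrow> V < 0 \<Longrightarrow>
      (C has_real_derivative Ff m g z V (C V) / Gf m g z V (C V)) (at V)"
begin

abbreviation v8 :: real where "v8 \<equiv> V8 g z"

lemma m_bounds: "1 \<le> m" "m \<le> 2" "0 < m*z"
  using m z by auto

lemma denominators_pos:
  assumes "v8 \<le> V"
  shows "0 < 1+V" "0 < 1+V+m*z"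
  using assms V8_window m_bounds by auto

lemma G_pos:
  assumes "v8 < V" "V < 0"
  shows "0 < Gf m g z V (C V)"
proof (rule ccontr)
  define G where "G = (\<lambda>V. Gf m g z V (C V))"
  define V0 where "V0 = - m*z/(m+1)"
  have "m*z/(m+1) \<le> 2*(3/25)/(1+1)" using m_bounds z by (intro frac_le mult_mono) auto
  then have V0: "v8 < V0" "V0 < 0" using V8_window m_bounds by (auto simp: V0_def)
  have D: "(m+1)*V0 + 2*m*z = m*z" unfolding V0_def using m_bounds by (simp add: field_simps)
  have "0 < m*g*z" using m_bounds g z by simp
  then have "0 < lam m g z + V0" unfolding lam_def using V0 V8_window by linarith
  then have "V0 * (1+V0) * (lam m g z + V0) < 0"
    using V0 denominators_pos(1)[of V0] by (simp add: mult_neg_pos)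
  moreover have "0 < (C V0)^2 * (m*z)" using C_pos[of V0] V0 m_bounds by simp
  ultimately have "0 < G V0" unfolding G_def Gf_def D by linarith
  have cont: "continuous_on {min V V0..max V V0} G"
    unfolding G_def Gf_def using V0 assms
    by (intro continuous_at_imp_continuous_on ballI continuous_intros DERIV_isCont[OF C_deriv]) auto
  assume "\<not> 0 < Gf m g z V (C V)"
  then have "G V < 0" using G_nonzero assms by (force simp: G_def)
  then obtain x where "min V V0 \<le> x" "x \<le> max V V0" "G x = 0"
    using IVT'[of G V 0 V0] IVT2'[of G V 0 V0] cont \<open>0 < G V0\<close>
    by (cases "V \<le> V0") (auto simp: min_def max_def)
  then show False using G_nonzero[of x] assms V0 by (auto simp: G_def)
qed

lemma C_sq_lt_Psi:
  assumes "v8 < V" "V < 0"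
  shows "(C V)^2 < Psi m g z V"
proof -
  define E where "E = (\<lambda>V. (C V)^2 - Psi m g z V)"
  define E' where "E' = (\<lambda>V. 2 * C V * (Ff m g z V (C V) / Gf m g z V (C V)) - Psi' m g z V)"
  have Psi_v8: "Psi m g z v8 = (1 + v8)^2"
    using Psi_V8[OF V8_root] denominators_pos[of v8] by simp
  have "0 < Pq m g z v8"
    using Pq_V8[OF V8_root] denominators_pos[of v8] by simp
  then have Psi'_pos: "0 < Psi' m g z V" if "v8 \<le> V" for V
    using m_bounds g z V8_window that by (intro Psi'_pos) auto
  have E_deriv: "(E has_real_derivative 2 * C x * C' - Psi' m g z x) (at x)"
    if "(C has_real_derivative C') (at x)" "v8 \<le> x" for x C'
    using DERIV_diff[OF DERIV_power[OF that(1), of 2] has_real_derivative_Psi[OF denominators_pos(2)]]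
      that(2) by (simp add: E_def mult_ac)
  have E'_v8: "(E has_real_derivative 2 * C v8 * slope8 m g z - Psi' m g z v8) (at v8)"
    by (rule E_deriv[OF C_deriv_V8]) simp
  have "C v8 * slope8 m g z < 0"
    using slope8_neg[OF m_bounds(1,2) g z] V8_window C_pos[of v8] by (simp add: mult_pos_neg)
  then have "2 * C v8 * slope8 m g z - Psi' m g z v8 < 0" using Psi'_pos[of v8] by simp
  then obtain d where "0 < d" and d: "\<And>h. 0 < h \<Longrightarrow> h < d \<Longrightarrow> E (v8 + h) < E v8"
    using DERIV_neg_dec_right[OF E'_v8] by blast
  have "E v8 = 0" unfolding E_def Psi_v8 C_V8 C8_def by simp
  then have "E y < 0" if "v8 < y" "y < v8 + d" for y
    using d[of "y - v8"] that by simp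
  then have start: "eventually (\<lambda>x. E x < 0) (at_right v8)"
    unfolding eventually_at_right_field using \<open>0 < d\<close> by (intro exI[of _ "v8 + d"]) auto
  have deriv: "(E has_real_derivative E' x) (at x)" if "v8 < x" "x < 0" for x
    unfolding E'_def by (rule E_deriv[OF C_deriv[OF that]]) (use that in simp)
  have zeros: "E' x < 0" if "v8 < x" "x < 0" "E x = 0" for x
  proof -
    have "Ff m g z x (C x) = C x * ((1+x+m*z)/(1+x)) * E x"
      unfolding E_def by (rule Ff_eq_Psi) (use denominators_pos that in auto)
    then have "E' x = - Psi' m g z x" using that by (simp add: E'_def)
    then show ?thesis using Psi'_pos[of x] that by simp
  qed
  have "E V < 0"
    by (rule negative_if_decreasing_at_zeros[OF deriv zeros start assms])
  then show ?thesis unfolding E_def by simp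
qed

lemma C_lt_C8:
  assumes "v8 < V" "V < 0"
  shows "C V < C8 g z"
proof -
  have F_div_G_neg: "Ff m g z x (C x) / Gf m g z x (C x) < 0" if "v8 < x" "x < 0" for x
  proof -
    have "0 < C x * ((1+x+m*z)/(1+x))" using C_pos denominators_pos that by simp
    then have "C x * ((1+x+m*z)/(1+x)) * ((C x)^2 - Psi m g z x) < 0"
      using C_sq_lt_Psi that by (intro mult_pos_neg) auto
    moreover have "Ff m g z x (C x) = C x * ((1+x+m*z)/(1+x)) * ((C x)^2 - Psi m g z x)"
      by (rule Ff_eq_Psi) (use denominators_pos that in auto)
    ultimately have "Ff m g z x (C x) < 0" by simp
    then show ?thesis using G_pos that by (simp add: divide_neg_pos)
  qed
  note slope_neg = slope8_neg[OF m_bounds(1,2) g z V8_window(1,2)]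
  have "C V < C v8"
  proof (rule DERIV_neg_imp_decreasing[OF assms(1)])
    fix x assume "v8 \<le> x" "x \<le> V"
    then consider "x = v8" | "v8 < x" "x < 0" using assms by linarith
    then show "\<exists>y. (C has_real_derivative y) (at x) \<and> y < 0"
      by cases (use C_deriv_V8 slope_neg C_deriv F_div_G_neg in blast)+
  qed
  then show ?thesis using C_V8 by simp
qed

lemma C_sq_lt_parabola:
  assumes "v8 < V" "V < 0"
  shows "(C V)^2 < -(3/2) * V"
proof -
  define H where "H = (\<lambda>V. (C V)^2 + 3/2 * V)"
  define H' where "H' = (\<lambda>V. 2 * C V * (Ff m g z V (C V) / Gf m g z V (C V)) + 3/2)"
  have "H v8 < 0" unfolding H_def C_V8 C8_def using V8_window(3) by (simp add: algebra_simps power2_eq_square)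
  moreover have "isCont H v8" unfolding H_def using C_deriv_V8 by (intro continuous_intros DERIV_isCont)
  ultimately have start: "eventually (\<lambda>x. H x < 0) (at_right v8)"
    by (intro order_tendstoD(2)[of H "H v8"]) (auto simp: isCont_def filterlim_at_split)
  have deriv: "(H has_real_derivative H' x) (at x)" if "v8 < x" "x < 0" for x
    using DERIV_add[OF DERIV_power[OF C_deriv[OF that], of 2] DERIV_cmult_Id[of "3/2"]]
    by (simp add: H_def H'_def mult_ac)
  have zeros: "H' x < 0" if x: "v8 < x" "x < 0" and "H x = 0" for x
  proof -
    have cc: "(C x)^2 = -3/2*x" using \<open>H x = 0\<close> by (simp add: H_def)
    have "(C x)^2 < (1 + v8)^2"
      using C_lt_C8[OF x] C_pos[of x] x by (intro power_strict_mono) (auto simp: C8_def)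
    then have "qf m g z x < 0"
      using cc x m g z V8_window V8_root by (intro qf_neg) auto
    then have "-x * qf m g z x < 0" using x by (intro mult_pos_neg) auto
    moreover have "(1+x) * (2*C x*Ff m g z x (C x) + 3/2*Gf m g z x (C x)) = -x * qf m g z x"
      by (rule parabola_numerator[OF denominators_pos(1) cc]) (use x in simp)
    ultimately have "(1+x) * (2*C x*Ff m g z x (C x) + 3/2*Gf m g z x (C x)) < 0" by simp
    then have "2*C x*Ff m g z x (C x) + 3/2*Gf m g z x (C x) < 0"
      using denominators_pos(1)[of x] x by (simp add: mult_less_0_iff)
    then show ?thesis
      using G_pos[OF x] by (simp add: H'_def field_simps)
  qed
  have "H V < 0"
    by (rule negative_if_decreasing_at_zeros[OF deriv zeros start assms])
  then show ?thesis unfolding H_def by simp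
qed

lemma C_lt_sqrt:
  assumes "v8 < V" "V < 0"
  shows "C V < sqrt (-(3/2) * V)"
  using real_sqrt_less_mono[OF C_sq_lt_parabola[OF assms]] C_pos[of V] assms by simp

lemma C_tendsto_0: "(C \<longlongrightarrow> 0) (at_left 0)"
proof (rule tendsto_sandwich[where f = "\<lambda>_. 0" and h = "\<lambda>V. sqrt (-(3/2) * V)"])
  have ev: "eventually (\<lambda>V. v8 < V \<and> V < 0) (at_left (0::real))"
    using eventually_at_left_real[of v8 0] V8_window by simp
  show "eventually (\<lambda>V. 0 \<le> C V) (at_left 0)"
    using ev by eventually_elim (simp add: C_pos less_imp_le)
  show "eventually (\<lambda>V. C V \<le> sqrt (-(3/2) * V)) (at_left 0)"
    using ev by eventually_elim (rule less_imp_le, rule C_lt_sqrt, auto)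
  have "((\<lambda>V. sqrt (-(3/2) * V)) \<longlongrightarrow> sqrt (-(3/2) * 0)) (at_left (0::real))"
    by (intro tendsto_intros)
  then show "((\<lambda>V. sqrt (-(3/2) * V)) \<longlongrightarrow> 0) (at_left 0)" by simp
qed simp

end

theorem mainTheorem19:
  fixes m :: nat and g z :: real and C :: "real \<Rightarrow> real"
  assumes hm: "m = 1 \<or> m = 2"
    and hg: "gamma1 < g" "g \<le> 3"
    and hz: "z2 g < z" "z \<le> zM g"
    \<comment> \<open>C is real-analytic at V8 (power series in V - V8), with C(V8) = C8 and C'(V8) = slope8\<close>
    and hloc: "\<exists>\<epsilon>>0. \<exists>a::nat \<Rightarrow> real. a 0 = C8 g z \<and> a 1 = slope8 (real m) g z \<and>
                 (\<forall>V. \<bar>V - V8 g z\<bar> < \<epsilon> \<longrightarrow> (\<lambda>n. a n * (V - V8 g z)^n) sums C V)"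
    \<comment> \<open>C is positive on [V8,0)\<close>
    and hpos: "\<forall>V\<in>{V8 g z..<0}. C V > 0"
    \<comment> \<open>C solves dC/dV = F/G on (V8,0)\<close>
    and hode: "\<forall>V\<in>{V8 g z<..<0}. Gf (real m) g z V (C V) \<noteq> 0 \<and>
                 (C has_real_derivative Ff (real m) g z V (C V) / Gf (real m) g z V (C V)) (at V)"
  shows "(\<forall>V\<in>{V8 g z<..<0}. C V < sqrt (- (3/2) * V)) \<and> (C \<longlongrightarrow> 0) (at_left 0)"
proof -
  obtain e a where "e > 0" "a 0 = C8 g z" "a 1 = slope8 (real m) g z"
    and "\<And>V. \<bar>V - V8 g z\<bar> < e \<Longrightarrow> (\<lambda>n. a n * (V - V8 g z)^n) sums C V"
    using hloc by blast
  note series = power_series_at_center[OF this(1,4)]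
  interpret P8_solution "real m" g z C
  proof
    show "C (V8 g z) = C8 g z" using series(1) \<open>a 0 = C8 g z\<close> by simp
    show "(C has_real_derivative slope8 (real m) g z) (at (V8 g z))"
      using series(2) \<open>a 1 = slope8 (real m) g z\<close> by simp
  qed (use hm hg V8_window[OF hg hz] hpos hode in auto)
  show ?thesis using C_lt_sqrt C_tendsto_0 by auto
qed

end
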